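(* Let $I_1\subset\mathbb{R}$ be an open interval and $I_2$ an open, relatively compact subinterval of $I_1$. For every integer $n\ge1$ and every $\varepsilon>0$ there exists $\delta>0$ such that for every $C^1$ map $h:I_1\to\mathbb{R}$ with $\|h-\mathrm{id}\|_{1,I_1}<\delta$ and every $x\in I_2$, the iterate $h^n(x)$ is defined and $$|(h^n(x)-x)-n(h(x)-x)|\le\varepsilon\,|h(x)-x|.$$
   Context: For an open set $J\subset\mathbb{R}$ and a $C^1$ map $u$ on $J$, $\|u\|_{1,J}=\sup_{x\in J}(|u(x)|+|u'(x)|)$. *)

theory Defs
  imports "HOL-Analysis.Analysis"
begin

definition C1_norm :: "real set \<Rightarrow> (real \<Rightarrow> real) \<Rightarrow> real" where
  "C1_norm J u = (SUP x\<in>J. \<bar>u x\<bar> + \<bar>deriv u x\<bar>)"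

definition C1_norm_finite :: "real set \<Rightarrow> (real \<Rightarrow> real) \<Rightarrow> bool" where
  "C1_norm_finite J u = bdd_above ((\<lambda>x. \<bar>u x\<bar> + \<bar>deriv u x\<bar>) ` J)"

end

theory Submission
  imports Defs
begin

text \<open>
  Write the C1-perturbation of the identity as h = id + g.  A small C1 norm of g on the
  convex open set I1 means that g is uniformly small and, by the mean value inequality,
  Lipschitz with a small constant.  Everything else is a statement about iterating a map
  y \<mapsto> y + g y, which we prove in an arbitrary normed vector space:
  (1) if every step moves points by at most \<delta>, the first k iterates of x stay within
      distance k\<delta> of x, hence inside any ball around x of radius larger than k\<delta>;
  (2) if g is L-Lipschitz with L \<le> 1 along the orbit, the k-th iterate is at distance
      at most (2^k - 1) |g x| from x;
  (3) telescoping, h^n x - x - n (h x - x) is the sum of g(h^k x) - g x over k < n,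
      which by (2) is bounded by L n 2^n |g x|.
  The theorem follows by choosing \<delta> small compared with the distance from the closure
  of I2 to the boundary of I1 (a compactness argument) and with \<epsilon> / (n 2^n).
\<close>

lemma C1_norm_pointwise:
  assumes "C1_norm_finite J u" and "y \<in> J"
  shows "\<bar>u y\<bar> + \<bar>deriv u y\<bar> \<le> C1_norm J u"
  using assms unfolding C1_norm_def C1_norm_finite_def by (rule cSUP_upper[rotated])

lemma C1_norm_small_imp_bounded_lipschitz:
  fixes u :: "real \<Rightarrow> real"
  assumes C1: "u C1_differentiable_on J" and "convex J"
    and fin: "C1_norm_finite J u" and le: "C1_norm J u \<le> L" and "0 \<le> L"
  shows "\<forall>y\<in>J. \<bar>u y\<bar> \<le> L" and "L-lipschitz_on J u"
proof -
  have pointwise: "\<bar>u y\<bar> + \<bar>deriv u y\<bar> \<le> L" if "y \<in> J" for y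
    using C1_norm_pointwise[OF fin that] le by linarith
  then show "\<forall>y\<in>J. \<bar>u y\<bar> \<le> L" by fastforce
  obtain D where D: "\<And>y. y \<in> J \<Longrightarrow> (u has_vector_derivative D y) (at y)"
    using C1 unfolding C1_differentiable_on_def by blast
  have deriv_u: "(u has_field_derivative D y) (at y within J)" if "y \<in> J" for y
    using has_vector_derivative_at_within[OF D[OF that]]
    by (simp add: has_real_derivative_iff_has_vector_derivative)
  have "\<bar>D y\<bar> \<le> L" if "y \<in> J" for y
    using pointwise[OF that] DERIV_imp_deriv[OF D[OF that, unfolded has_real_derivative_iff_has_vector_derivative[symmetric]]]
    by simp
  then show "L-lipschitz_on J u"
    using field_differentiable_bound[OF \<open>convex J\<close> deriv_u] \<open>0 \<le> L\<close>
    by (auto simp: lipschitz_on_def dist_real_def)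
qed

lemma iterate_displacement_le:
  fixes h :: "'a::real_normed_vector \<Rightarrow> 'a"
  assumes step: "\<forall>y\<in>J. norm (h y - y) \<le> \<delta>" and "0 \<le> \<delta>"
    and ball: "ball x r \<subseteq> J" and "real k * \<delta> < r"
  shows "norm ((h ^^ k) x - x) \<le> real k * \<delta>"
  using \<open>real k * \<delta> < r\<close>
proof (induction k)
  case 0
  then show ?case by simp
next
  case (Suc k)
  have "real k * \<delta> < r" using Suc.prems \<open>0 \<le> \<delta>\<close> by (simp add: algebra_simps)
  with Suc.IH have near: "norm ((h ^^ k) x - x) \<le> real k * \<delta>" by simp
  with \<open>real k * \<delta> < r\<close> have "(h ^^ k) x \<in> J"
    using ball by (auto simp: dist_norm norm_minus_commute)
  then have "norm (h ((h ^^ k) x) - (h ^^ k) x) \<le> \<delta>" using step by blast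
  then have "norm ((h ^^ Suc k) x - x) \<le> norm ((h ^^ k) x - x) + \<delta>"
    using norm_triangle_ineq[of "h ((h ^^ k) x) - (h ^^ k) x" "(h ^^ k) x - x"] by simp
  with near show ?case by (simp add: algebra_simps)
qed

corollary iterate_in_ball:
  fixes h :: "'a::real_normed_vector \<Rightarrow> 'a"
  assumes "\<forall>y\<in>J. norm (h y - y) \<le> \<delta>" and "0 \<le> \<delta>"
    and "ball x r \<subseteq> J" and "real k * \<delta> < r"
  shows "(h ^^ k) x \<in> J"
proof -
  have "norm ((h ^^ k) x - x) < r"
    using iterate_displacement_le[OF assms] assms(4) by linarith
  then show ?thesis using assms(3) by (auto simp: dist_norm norm_minus_commute)
qed

text \<open>If the displacement g y = h y - y is L-Lipschitz (L \<le> 1) on a set containing the first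
  k points of the orbit of x, each step at most doubles the distance to x plus |g x|, so the
  k-th iterate lies within (2^k - 1) |g x| of x.\<close>
lemma iterate_displacement_growth:
  fixes h :: "'a::real_normed_vector \<Rightarrow> 'a"
  assumes lip: "L-lipschitz_on J (\<lambda>y. h y - y)" and "L \<le> 1"
    and orbit: "\<And>j. j < k \<Longrightarrow> (h ^^ j) x \<in> J"
  shows "norm ((h ^^ k) x - x) \<le> (2 ^ k - 1) * norm (h x - x)"
  using orbit
proof (induction k)
  case 0
  then show ?case by simp
next
  case (Suc k)
  let ?y = "(h ^^ k) x" and ?gx = "norm (h x - x)"
  have IH: "norm (?y - x) \<le> (2 ^ k - 1) * ?gx" using Suc by simp
  have "?y \<in> J" "x \<in> J" using Suc.prems[of k] Suc.prems[of 0] by auto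
  then have "norm ((h ?y - ?y) - (h x - x)) \<le> L * norm (?y - x)"
    using lip by (auto simp: lipschitz_on_def dist_norm)
  also have "\<dots> \<le> norm (?y - x)"
    using \<open>L \<le> 1\<close> by (simp add: mult_left_le_one_le lipschitz_on_nonneg[OF lip])
  finally have "norm (h ?y - ?y) \<le> norm (?y - x) + ?gx"
    using norm_triangle_ineq2[of "h ?y - ?y" "h x - x"] by linarith
  moreover have "norm ((h ^^ Suc k) x - x) \<le> norm (h ?y - ?y) + norm (?y - x)"
    using norm_triangle_ineq[of "h ?y - ?y" "?y - x"] by simp
  ultimately have "norm ((h ^^ Suc k) x - x) \<le> 2 * norm (?y - x) + ?gx" by linarith
  also have "\<dots> \<le> (2 ^ Suc k - 1) * ?gx" using IH by (simp add: algebra_simps)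
  finally show ?case .
qed

text \<open>Main estimate: after n steps, h^n x - x differs from n (h x - x) by at most
  L n 2^n |h x - x|.  The difference telescopes into the sum of g(h^k x) - g x over k < n.\<close>
lemma iterate_linear_deviation:
  fixes h :: "'a::real_normed_vector \<Rightarrow> 'a"
  assumes lip: "L-lipschitz_on J (\<lambda>y. h y - y)" and "L \<le> 1"
    and orbit: "\<And>j. j < n \<Longrightarrow> (h ^^ j) x \<in> J"
  shows "norm (((h ^^ n) x - x) - real n *\<^sub>R (h x - x)) \<le> L * real n * 2 ^ n * norm (h x - x)"
proof -
  define g where "g y = h y - y" for y
  have "(h ^^ n) x - x = (\<Sum>k<n. (h ^^ Suc k) x - (h ^^ k) x)"
    using sum_lessThan_telescope[of "\<lambda>k. (h ^^ k) x" n] by simp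
  then have "((h ^^ n) x - x) - real n *\<^sub>R (h x - x) = (\<Sum>k<n. g ((h ^^ k) x) - g x)"
    by (simp add: sum_subtractf g_def scaleR_diff_right sum_constant_scaleR)
  then have "norm (((h ^^ n) x - x) - real n *\<^sub>R (h x - x)) \<le> (\<Sum>k<n. norm (g ((h ^^ k) x) - g x))"
    by (simp add: norm_sum)
  also have "\<dots> \<le> (\<Sum>k<n. L * (2 ^ n * norm (g x)))"
  proof (rule sum_mono)
    fix k assume "k \<in> {..<n}"
    then have "k < n" by simp
    have "(h ^^ k) x \<in> J" "x \<in> J" using orbit[of k] orbit[of 0] \<open>k < n\<close> by auto
    then have "norm (g ((h ^^ k) x) - g x) \<le> L * norm ((h ^^ k) x - x)"
      using lip by (auto simp: lipschitz_on_def dist_norm g_def)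
    also have "\<dots> \<le> L * ((2 ^ k - 1) * norm (g x))"
      using iterate_displacement_growth[OF lip \<open>L \<le> 1\<close>, of k x] orbit \<open>k < n\<close>
      by (simp add: mult_left_mono lipschitz_on_nonneg[OF lip] g_def)
    also have "\<dots> \<le> L * (2 ^ n * norm (g x))"
    proof -
      have "(2::real) ^ k \<le> 2 ^ n" using \<open>k < n\<close> by (intro power_increasing) auto
      then have "(2::real) ^ k - 1 \<le> 2 ^ n" by linarith
      then show ?thesis
        by (intro mult_left_mono mult_right_mono) (auto simp: lipschitz_on_nonneg[OF lip])
    qed
    finally show "norm (g ((h ^^ k) x) - g x) \<le> L * (2 ^ n * norm (g x))" .
  qed
  also have "\<dots> = L * real n * 2 ^ n * norm (h x - x)" by (simp add: g_def)
  finally show ?thesis .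
qed

lemma C1_small_iterate_estimate:
  fixes h :: "real \<Rightarrow> real"
  assumes "convex J" and "h C1_differentiable_on J"
    and "C1_norm_finite J (\<lambda>y. h y - y)" and "C1_norm J (\<lambda>y. h y - y) < \<delta>"
    and "0 < \<delta>" and "\<delta> \<le> 1" and "ball x r \<subseteq> J" and "real n * \<delta> < r"
  shows "\<forall>k<n. (h ^^ k) x \<in> J"
    and "\<bar>((h ^^ n) x - x) - real n * (h x - x)\<bar> \<le> \<delta> * real n * 2 ^ n * \<bar>h x - x\<bar>"
proof -
  have small: "\<forall>y\<in>J. \<bar>h y - y\<bar> \<le> \<delta>" and lip: "\<delta>-lipschitz_on J (\<lambda>y. h y - y)"
    using C1_norm_small_imp_bounded_lipschitz[of "\<lambda>y. h y - y" J \<delta>] assms by auto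
  have orbit: "(h ^^ k) x \<in> J" if "k < n" for k
  proof (rule iterate_in_ball[of J h \<delta>])
    have "real k * \<delta> \<le> real n * \<delta>" using \<open>k < n\<close> \<open>0 < \<delta>\<close> by simp
    then show "real k * \<delta> < r" using \<open>real n * \<delta> < r\<close> by linarith
  qed (use small assms in auto)
  then show "\<forall>k<n. (h ^^ k) x \<in> J" by blast
  show "\<bar>((h ^^ n) x - x) - real n * (h x - x)\<bar> \<le> \<delta> * real n * 2 ^ n * \<bar>h x - x\<bar>"
    using iterate_linear_deviation[OF lip \<open>\<delta> \<le> 1\<close>, of n x] orbit by simp
qed

theorem lemma3p10:
  fixes I1 I2 :: "real set" and n :: nat and \<epsilon> :: real
  assumes "open I1" and "is_interval I1" and "I1 \<noteq> {}"
    and "open I2" and "is_interval I2"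
    and "compact (closure I2)" and "closure I2 \<subseteq> I1"
    and "n \<ge> 1" and "\<epsilon> > 0"
  shows "\<exists>\<delta>>0. \<forall>h :: real \<Rightarrow> real.
           h C1_differentiable_on I1 \<and>
           C1_norm_finite I1 (\<lambda>x. h x - x) \<and> C1_norm I1 (\<lambda>x. h x - x) < \<delta> \<longrightarrow>
           (\<forall>x\<in>I2. (\<forall>k<n. (h ^^ k) x \<in> I1) \<and>
              \<bar>((h ^^ n) x - x) - real n * (h x - x)\<bar> \<le> \<epsilon> * \<bar>h x - x\<bar>)"
proof -
  obtain r where "r > 0" and balls: "(\<Union>x\<in>closure I2. ball x r) \<subseteq> I1"
    using compact_subset_open_imp_ball_epsilon_subset[OF assms(6,1,7)] by blast
  define \<delta> where "\<delta> = min 1 (min (r / (real n + 1)) (\<epsilon> / (real n * 2 ^ n + 1)))"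
  have "\<delta> > 0" "\<delta> \<le> 1" using \<open>r > 0\<close> \<open>\<epsilon> > 0\<close> by (auto simp: \<delta>_def add_nonneg_pos)
  have "\<delta> \<le> r / (real n + 1)" by (simp add: \<delta>_def)
  then have "(real n + 1) * \<delta> \<le> r" by (simp add: field_simps)
  then have n_steps: "real n * \<delta> < r" using \<open>\<delta> > 0\<close> by (simp add: algebra_simps)
  have "\<delta> \<le> \<epsilon> / (real n * 2 ^ n + 1)" by (simp add: \<delta>_def)
  then have "(real n * 2 ^ n + 1) * \<delta> \<le> \<epsilon>"
    by (simp add: pos_le_divide_eq add_nonneg_pos mult.commute)
  then have deviation: "\<delta> * real n * 2 ^ n \<le> \<epsilon>" using \<open>\<delta> > 0\<close> by (simp add: algebra_simps)
  have "(\<forall>k<n. (h ^^ k) x \<in> I1) \<and>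
      \<bar>((h ^^ n) x - x) - real n * (h x - x)\<bar> \<le> \<epsilon> * \<bar>h x - x\<bar>"
    if "h C1_differentiable_on I1" "C1_norm_finite I1 (\<lambda>x. h x - x)"
      "C1_norm I1 (\<lambda>x. h x - x) < \<delta>" and "x \<in> I2" for h :: "real \<Rightarrow> real" and x
  proof -
    have "ball x r \<subseteq> I1" using balls closure_subset \<open>x \<in> I2\<close> by blast
    note estimate = C1_small_iterate_estimate[OF is_interval_convex[OF assms(2)] that(1-3)
        \<open>\<delta> > 0\<close> \<open>\<delta> \<le> 1\<close> this n_steps]
    have "\<delta> * real n * 2 ^ n * \<bar>h x - x\<bar> \<le> \<epsilon> * \<bar>h x - x\<bar>"
      using deviation by (simp add: mult_right_mono)
    with estimate show ?thesis by (meson order_trans)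
  qed
  then show ?thesis using \<open>\<delta> > 0\<close> by blast
qed

end
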